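(* Let $K\in\mathcal{U}C_b^3(\mathbb{R}^d,\mathbb{R}^{d\times d})$ and define, for $\xi\in\mathcal{M}$, $B(\xi)=K\ast\xi$. Then $B$ maps $\mathcal{M}$ continuously into $C_b^2(\mathbb{R}^d,\mathbb{R}^d)$ (continuity with respect to the metric $d$ on $\mathcal{M}$), and there is a constant $C_B>0$ such that for all $\xi,\xi'\in\mathcal{M}$: (B1) $\|B(\xi)\|_{C_b^2}\le C_B(\|\xi\|+1)$; (B2) $\|B(\xi)-B(\xi')\|_\infty\le C_B\|\xi-\xi'\|$; (B3) $\|DB(\xi)-DB(\xi')\|_\infty\le C_B\|\xi-\xi'\|$, where $DB(\xi)$ denotes the spatial derivative of the vector field $B(\xi)$.
   Context: $C_b^k(\mathbb{R}^d,\mathbb{R}^m)$ is the space of $C^k$ functions bounded together with all derivatives up to order $k$ (with norm $\|\cdot\|_{C^k_b}$ the sum of the sup norms of these derivatives); $\mathcal{U}C_b^3(\mathbb{R}^d,\mathbb{R}^m)$ is the subset of $C_b^3$ of those $f$ with $f$, $Df$, $D^2f$ uniformly continuous. $\mathcal{M}$ is the dual space of $C_b(\mathbb{R}^d;\mathbb{R}^d)$ (bounded continuous vector fields with sup norm $\|\cdot\|_\infty$), with dual norm $|\xi|_{\mathcal{M}}=\sup_{\|\theta\|_\infty\le 1}|\xi(\theta)|$. The weak norm is $\|\xi\|=\sup\{\xi(\theta):\|\theta\|_\infty+\mathrm{Lip}(\theta)\le 1\}$, $\mathrm{Lip}(\theta)$ the Lipschitz constant, and $d(\xi,\xi')=\|\xi-\xi'\|$.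 For $\xi\in\mathcal{M}$ and continuous bounded $K:\mathbb{R}^d\to\mathbb{R}^{d\times d}$, $K\ast\xi$ is the vector field with components $(K\ast\xi)_i(x)=\xi(K_{i\cdot}(x-\cdot))$, where $K_{i\cdot}(z)=(K_{ij}(z))_{j=1,\dots,d}$. *)

theory Defs
  imports "HOL-Analysis.Analysis"
begin

text \<open>The space M: dual of the Banach space of bounded continuous vector fields on R^d.\<close>
type_synonym 'd meas = "((real^'d) \<Rightarrow>\<^sub>C (real^'d)) \<Rightarrow>\<^sub>L real"

definition weak_norm :: "'d::finite meas \<Rightarrow> real" where
  "weak_norm \<xi> = (SUP \<theta> \<in> {\<theta>. \<exists>L. lipschitz_on L UNIV (apply_bcontfun \<theta>) \<and> norm \<theta> + L \<le> 1}.
                     blinfun_apply \<xi> \<theta>)"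

definition conv :: "(real^'d \<Rightarrow> real^'d^'d) \<Rightarrow> 'd::finite meas \<Rightarrow> real^'d \<Rightarrow> real^'d" where
  "conv K \<xi> x = (\<chi> i. blinfun_apply \<xi> (Bcontfun (\<lambda>z. K (x - z) $ i)))"

definition sup_norm :: "('a \<Rightarrow> 'b::real_normed_vector) \<Rightarrow> real" where
  "sup_norm f = (SUP x. norm (f x))"

definition Cb2_derivs :: "('a::euclidean_space \<Rightarrow> 'b::euclidean_space) \<Rightarrow> ('a \<Rightarrow> ('a \<Rightarrow>\<^sub>L 'b))
     \<Rightarrow> ('a \<Rightarrow> ('a \<Rightarrow>\<^sub>L ('a \<Rightarrow>\<^sub>L 'b))) \<Rightarrow> bool" where
  "Cb2_derivs f D1 D2 \<longleftrightarrow>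
     (\<forall>x. (f has_derivative blinfun_apply (D1 x)) (at x)) \<and>
     (\<forall>x. (D1 has_derivative blinfun_apply (D2 x)) (at x)) \<and>
     continuous_on UNIV D2 \<and>
     bounded (range f) \<and> bounded (range D1) \<and> bounded (range D2)"

definition Cb2_norm :: "('a \<Rightarrow> 'b::real_normed_vector) \<Rightarrow> ('a \<Rightarrow> 'c::real_normed_vector)
     \<Rightarrow> ('a \<Rightarrow> 'e::real_normed_vector) \<Rightarrow> real" where
  "Cb2_norm f D1 D2 = sup_norm f + sup_norm D1 + sup_norm D2"

definition UCb3 :: "('a::euclidean_space \<Rightarrow> 'b::euclidean_space) \<Rightarrow> bool" where
  "UCb3 f \<longleftrightarrow> (\<exists>(D1::'a \<Rightarrow> ('a \<Rightarrow>\<^sub>L 'b)) (D2::'a \<Rightarrow> ('a \<Rightarrow>\<^sub>L ('a \<Rightarrow>\<^sub>L 'b)))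
       (D3::'a \<Rightarrow> ('a \<Rightarrow>\<^sub>L ('a \<Rightarrow>\<^sub>L ('a \<Rightarrow>\<^sub>L 'b)))).
     (\<forall>x. (f has_derivative blinfun_apply (D1 x)) (at x)) \<and>
     (\<forall>x. (D1 has_derivative blinfun_apply (D2 x)) (at x)) \<and>
     (\<forall>x. (D2 has_derivative blinfun_apply (D3 x)) (at x)) \<and>
     continuous_on UNIV D3 \<and>
     bounded (range f) \<and> bounded (range D1) \<and> bounded (range D2) \<and> bounded (range D3) \<and>
     uniformly_continuous_on UNIV f \<and> uniformly_continuous_on UNIV D1 \<and>
     uniformly_continuous_on UNIV D2)"

end

theory Submission
  imports Defs
begin

text \<open>
  For fixed x, the value (K * xi)(x) is xi applied row-wise to the translate z \<mapsto> K (x - z), so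
  K * xi is linear in xi. Differentiation passes under xi because the first-order remainders of K
  and DK are small uniformly in the base point, which gives D^k (K * xi) = (D^k K) * xi for k \<le> 2.
  Each of K, DK, D^2 K is bounded and Lipschitz (the next derivative being bounded), so the rows of
  its translates are, after rescaling, test functions for the weak norm. Hence every
  |D^k (K * xi)(x)| is bounded by a constant times the weak norm of xi, uniformly in x, and linearity
  in xi turns this into (B1)-(B3) and the continuity of xi \<mapsto> K * xi.
\<close>

lemma Bcontfun_plus:
  "f \<in> bcontfun \<Longrightarrow> g \<in> bcontfun \<Longrightarrow> Bcontfun (\<lambda>z. f z + g z) = Bcontfun f + Bcontfun g"
  by (rule bcontfun_eqI) (simp add: Bcontfun_inverse plus_cont)

lemma Bcontfun_scaleR:
  "f \<in> bcontfun \<Longrightarrow> Bcontfun (\<lambda>z. c *\<^sub>R f z) = c *\<^sub>R Bcontfun f"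
  by (rule bcontfun_eqI) (simp add: Bcontfun_inverse scaleR_cont)

lemma bcontfun_compose_bounded_linear:
  assumes "bounded_linear T" "g \<in> bcontfun"
  shows "(\<lambda>z. T (g z)) \<in> bcontfun"
proof -
  have "range (\<lambda>z. T (g z)) = T ` range g" by auto
  then show ?thesis
    using assms bounded_linear_image[OF _ assms(1)]
    by (auto simp: bcontfun_def intro: continuous_on_compose2[OF linear_continuous_on[OF assms(1)]])
qed

lemma bcontfun_shift:
  fixes G :: "'a::real_normed_vector \<Rightarrow> 'b::real_normed_vector"
  assumes "G \<in> bcontfun"
  shows "(\<lambda>z. G (x - z)) \<in> bcontfun"
proof -
  have G: "continuous_on UNIV G" "bounded (range G)"
    using assms by (simp_all add: bcontfun_def)
  have "continuous_on UNIV (\<lambda>z. G (x - z))"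
    by (rule continuous_on_compose2[OF G(1)]) (auto intro!: continuous_intros)
  moreover have "bounded (range (\<lambda>z. G (x - z)))"
    by (rule bounded_subset[OF G(2)]) auto
  ultimately show ?thesis by (simp add: bcontfun_def)
qed

lemma lipschitz_on_compose_bounded_linear:
  assumes "linear T" "\<And>v. norm (T v) \<le> c * norm v" "0 \<le> c" "lipschitz_on L U g"
  shows "lipschitz_on (c * L) U (\<lambda>z. T (g z))"
proof (rule lipschitz_onI)
  show "0 \<le> c * L" using assms(3) lipschitz_on_nonneg[OF assms(4)] by simp
  fix x y assume "x \<in> U" "y \<in> U"
  have "dist (T (g x)) (T (g y)) = norm (T (g x - g y))"
    by (simp add: dist_norm linear_diff[OF assms(1)])
  also have "\<dots> \<le> c * dist (g x) (g y)" using assms(2) by (simp add: dist_norm)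
  also have "\<dots> \<le> c * (L * dist x y)"
    using lipschitz_onD[OF assms(4) \<open>x \<in> U\<close> \<open>y \<in> U\<close>] assms(3) by (rule mult_left_mono)
  finally show "dist (T (g x)) (T (g y)) \<le> c * L * dist x y" by simp
qed

lemma lipschitz_on_shift:
  fixes G :: "'a::real_normed_vector \<Rightarrow> 'b::metric_space"
  assumes "lipschitz_on L UNIV G"
  shows "lipschitz_on L UNIV (\<lambda>z. G (x - z))"
proof (rule lipschitz_onI)
  show "0 \<le> L" using assms by (rule lipschitz_on_nonneg)
  fix y z :: 'a
  have "dist (x - y) (x - z) = dist y z" by (simp add: dist_norm norm_minus_commute)
  then show "dist (G (x - y)) (G (x - z)) \<le> L * dist y z"
    using lipschitz_onD[OF assms, of "x - y" "x - z"] by simp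
qed

lemma norm_le_card_mult_component_bound:
  fixes v :: "real^'n::finite" and b :: real
  assumes "\<And>i. \<bar>v $ i\<bar> \<le> b"
  shows "norm v \<le> CARD('n) * b"
proof -
  have "norm v \<le> (\<Sum>i\<in>UNIV. \<bar>v $ i\<bar>)" by (rule norm_le_l1_cart)
  also have "\<dots> \<le> (\<Sum>i\<in>(UNIV::'n set). b)" by (rule sum_mono) (rule assms)
  finally show ?thesis by simp
qed

lemma has_derivative_uniform_remainder:
  fixes f :: "'a::real_normed_vector \<Rightarrow> 'b::real_normed_vector"
  assumes der: "\<And>x. (f has_derivative blinfun_apply (D x)) (at x)"
    and uc: "uniformly_continuous_on UNIV D" and "e > 0"
  obtains d where "d > 0" "\<And>w h. norm h < d \<Longrightarrow> norm (f (w + h) - f w - D w h) \<le> e * norm h"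
proof -
  obtain d where "d > 0" and d: "\<And>x x'. dist x' x < d \<Longrightarrow> dist (D x') (D x) < e"
    using uc \<open>e > 0\<close> unfolding uniformly_continuous_on_def by blast
  have "norm (f (w + h) - f w - D w h) \<le> e * norm h" if h: "norm h < d" for w h
  proof -
    define g where "g y = f y - D w y" for y
    have g_deriv: "(g has_derivative (\<lambda>v. D y v - D w v)) (at y within closed_segment w (w + h))" for y
      unfolding g_def
      by (rule has_derivative_at_withinI, intro has_derivative_diff der bounded_linear_imp_has_derivative
          blinfun.bounded_linear_right)
    have "onorm (\<lambda>v. D y v - D w v) \<le> e" if "y \<in> closed_segment w (w + h)" for y
    proof -
      have "dist y w \<le> norm h" using segment_bound1[OF that] by (simp add: dist_norm)
      then have "norm (D y - D w) < e" using d h by (simp add: dist_norm)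
      then show ?thesis by (simp add: norm_blinfun.rep_eq blinfun.diff_left[abs_def])
    qed
    then have "norm (g (w + h) - g w) \<le> e * norm (w + h - w)"
      by (intro differentiable_bound[OF convex_closed_segment g_deriv]) auto
    then show ?thesis by (simp add: g_def blinfun.add_right algebra_simps)
  qed
  with \<open>d > 0\<close> that show ?thesis by blast
qed

lemma lipschitz_on_blinfun_derivative_bound:
  fixes f :: "'a::real_normed_vector \<Rightarrow> 'b::real_normed_vector"
  assumes "\<And>x. (f has_derivative blinfun_apply (D x)) (at x)" "\<And>x. norm (D x) \<le> B" "0 \<le> B"
  shows "lipschitz_on B UNIV f"
  by (rule bounded_derivative_imp_lipschitz)
    (use assms in \<open>auto intro: has_derivative_at_withinI simp: norm_blinfun.rep_eq[symmetric]\<close>)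

text \<open>
  An abstraction of the action of xi on bounded continuous fields: C bounds it against the sup norm,
  W against the sup norm plus the Lipschitz constant, i.e. the weak norm. Both bounds survive the
  lifting to operator-valued fields below, which is how the derivatives of K * xi are handled.
\<close>
definition bcontfun_operator ::
    "(('x::metric_space \<Rightarrow> 'w::real_normed_vector) \<Rightarrow> 'v::real_normed_vector) \<Rightarrow> real \<Rightarrow> real \<Rightarrow> bool" where
  "bcontfun_operator A C W \<longleftrightarrow> 0 \<le> C \<and> 0 \<le> W \<and>
     (\<forall>f g. f \<in> bcontfun \<longrightarrow> g \<in> bcontfun \<longrightarrow> A (\<lambda>z. f z + g z) = A f + A g) \<and>
     (\<forall>c f. f \<in> bcontfun \<longrightarrow> A (\<lambda>z. c *\<^sub>R f z) = c *\<^sub>R A f) \<and>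
     (\<forall>g M. g \<in> bcontfun \<longrightarrow> (\<forall>z. norm (g z) \<le> M) \<longrightarrow> norm (A g) \<le> C * M) \<and>
     (\<forall>g M L. g \<in> bcontfun \<longrightarrow> (\<forall>z. norm (g z) \<le> M) \<longrightarrow> lipschitz_on L UNIV g \<longrightarrow>
        norm (A g) \<le> W * (M + L))"

context
  fixes A :: "('x::metric_space \<Rightarrow> 'w::real_normed_vector) \<Rightarrow> 'v::real_normed_vector"
    and C W :: real
  assumes A: "bcontfun_operator A C W"
begin

lemma bcontfun_operator_nonneg: "0 \<le> C" "0 \<le> W"
  using A by (auto simp: bcontfun_operator_def)

lemma bcontfun_operator_add:
  "f \<in> bcontfun \<Longrightarrow> g \<in> bcontfun \<Longrightarrow> A (\<lambda>z. f z + g z) = A f + A g"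
  using A by (auto simp: bcontfun_operator_def)

lemma bcontfun_operator_scaleR: "f \<in> bcontfun \<Longrightarrow> A (\<lambda>z. c *\<^sub>R f z) = c *\<^sub>R A f"
  using A by (auto simp: bcontfun_operator_def)

lemma bcontfun_operator_diff:
  assumes "f \<in> bcontfun" "g \<in> bcontfun"
  shows "A (\<lambda>z. f z - g z) = A f - A g"
  using bcontfun_operator_add[OF assms(1) scaleR_cont[OF assms(2), of "-1"]]
    bcontfun_operator_scaleR[OF assms(2), of "-1"]
  by simp

lemma bcontfun_operator_norm_le:
  "g \<in> bcontfun \<Longrightarrow> (\<And>z. norm (g z) \<le> M) \<Longrightarrow> norm (A g) \<le> C * M"
  using A by (auto simp: bcontfun_operator_def)

lemma bcontfun_operator_norm_le_weak:
  "g \<in> bcontfun \<Longrightarrow> (\<And>z. norm (g z) \<le> M) \<Longrightarrow> lipschitz_on L UNIV g \<Longrightarrow> norm (A g) \<le> W * (M + L)"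
  using A by (auto simp: bcontfun_operator_def)

end

lemma bcontfun_blinfun_apply:
  "\<Phi> \<in> bcontfun \<Longrightarrow> (\<lambda>z. blinfun_apply (\<Phi> z) h) \<in> bcontfun"
  using bcontfun_compose_bounded_linear[OF blinfun.bounded_linear_left] .

lemma norm_blinfun_apply_le: "norm F \<le> M \<Longrightarrow> norm (blinfun_apply F h) \<le> M * norm h"
  using norm_blinfun[of F h] by (meson mult_right_mono norm_ge_zero order_trans)

lemma lipschitz_on_blinfun_apply:
  "lipschitz_on L U \<Phi> \<Longrightarrow> lipschitz_on (norm h * L) U (\<lambda>z. blinfun_apply (\<Phi> z) h)"
proof (rule lipschitz_on_compose_bounded_linear[where T = "\<lambda>F. blinfun_apply F h"])
  show "norm (blinfun_apply F h) \<le> norm h * norm F" for F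
    using norm_blinfun[of F h] by (simp add: mult.commute)
qed (auto intro: bounded_linear.linear[OF blinfun.bounded_linear_left])

definition blinfun_lift ::
    "(('x \<Rightarrow> 'w::real_normed_vector) \<Rightarrow> 'v::real_normed_vector) \<Rightarrow> ('x \<Rightarrow> ('a::real_normed_vector \<Rightarrow>\<^sub>L 'w))
       \<Rightarrow> ('a \<Rightarrow>\<^sub>L 'v)" where
  "blinfun_lift A \<Phi> = Blinfun (\<lambda>h. A (\<lambda>z. blinfun_apply (\<Phi> z) h))"

context
  fixes A :: "('x::metric_space \<Rightarrow> 'w::real_normed_vector) \<Rightarrow> 'v::real_normed_vector"
    and C W :: real
  assumes A: "bcontfun_operator A C W"
begin

lemma blinfun_lift_apply:
  assumes "\<Phi> \<in> bcontfun"
  shows "blinfun_apply (blinfun_lift A \<Phi>) h = A (\<lambda>z. blinfun_apply (\<Phi> z) h)"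
proof -
  obtain M where M: "\<And>z. norm (\<Phi> z) \<le> M"
    using assms by (auto simp: bcontfun_def bounded_iff)
  have "bounded_linear (\<lambda>h. A (\<lambda>z. blinfun_apply (\<Phi> z) h))"
  proof (rule bounded_linear_intro[where K = "C * M"])
    fix x y
    show "A (\<lambda>z. \<Phi> z (x + y)) = A (\<lambda>z. \<Phi> z x) + A (\<lambda>z. \<Phi> z y)"
      by (simp add: blinfun.add_right bcontfun_operator_add[OF A] bcontfun_blinfun_apply assms)
  next
    fix r x
    show "A (\<lambda>z. \<Phi> z (r *\<^sub>R x)) = r *\<^sub>R A (\<lambda>z. \<Phi> z x)"
      by (simp add: blinfun.scaleR_right bcontfun_operator_scaleR[OF A] bcontfun_blinfun_apply assms)
  next
    fix x :: 'a
    have "norm (A (\<lambda>z. \<Phi> z x)) \<le> C * (M * norm x)"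
      by (intro bcontfun_operator_norm_le[OF A] bcontfun_blinfun_apply assms norm_blinfun_apply_le M)
    then show "norm (A (\<lambda>z. \<Phi> z x)) \<le> norm x * (C * M)" by (simp add: algebra_simps)
  qed
  then show ?thesis by (simp add: blinfun_lift_def bounded_linear_Blinfun_apply)
qed

lemma norm_blinfun_lift_le:
  assumes "\<Phi> \<in> bcontfun" "\<And>z. norm (\<Phi> z) \<le> M"
  shows "norm (blinfun_lift A \<Phi>) \<le> C * M"
proof (rule norm_blinfun_bound)
  show "0 \<le> C * M"
    using bcontfun_operator_nonneg[OF A] order_trans[OF norm_ge_zero assms(2)] by simp
  fix h
  have "norm (A (\<lambda>z. \<Phi> z h)) \<le> C * (M * norm h)"
    by (intro bcontfun_operator_norm_le[OF A] bcontfun_blinfun_apply assms norm_blinfun_apply_le)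
  then show "norm (blinfun_lift A \<Phi> h) \<le> C * M * norm h"
    by (simp add: blinfun_lift_apply[OF assms(1)] mult.assoc)
qed

lemma norm_blinfun_lift_le_weak:
  assumes "\<Phi> \<in> bcontfun" "\<And>z. norm (\<Phi> z) \<le> M" "lipschitz_on L UNIV \<Phi>"
  shows "norm (blinfun_lift A \<Phi>) \<le> W * (M + L)"
proof (rule norm_blinfun_bound)
  show "0 \<le> W * (M + L)"
    using bcontfun_operator_nonneg[OF A] order_trans[OF norm_ge_zero assms(2)]
      lipschitz_on_nonneg[OF assms(3)] by simp
  fix h
  have "norm (A (\<lambda>z. \<Phi> z h)) \<le> W * (M * norm h + norm h * L)"
    by (intro bcontfun_operator_norm_le_weak[OF A] bcontfun_blinfun_apply assms(1)
        norm_blinfun_apply_le assms(2) lipschitz_on_blinfun_apply assms(3))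
  then show "norm (blinfun_lift A \<Phi> h) \<le> W * (M + L) * norm h"
    by (simp add: blinfun_lift_apply[OF assms(1)] algebra_simps)
qed

lemma bcontfun_operator_blinfun_lift:
  "bcontfun_operator (blinfun_lift A :: ('x \<Rightarrow> ('a::real_normed_vector \<Rightarrow>\<^sub>L 'w)) \<Rightarrow> _) C W"
  unfolding bcontfun_operator_def
proof (intro conjI allI impI bcontfun_operator_nonneg[OF A])
  fix \<Phi> \<Psi> :: "'x \<Rightarrow> ('a \<Rightarrow>\<^sub>L 'w)" assume "\<Phi> \<in> bcontfun" "\<Psi> \<in> bcontfun"
  then show "blinfun_lift A (\<lambda>z. \<Phi> z + \<Psi> z) = blinfun_lift A \<Phi> + blinfun_lift A \<Psi>"
    by (intro blinfun_eqI)
      (simp add: blinfun_lift_apply plus_cont blinfun.add_left bcontfun_operator_add[OF A]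
        bcontfun_blinfun_apply)
next
  fix c and \<Phi> :: "'x \<Rightarrow> ('a \<Rightarrow>\<^sub>L 'w)" assume "\<Phi> \<in> bcontfun"
  then show "blinfun_lift A (\<lambda>z. c *\<^sub>R \<Phi> z) = c *\<^sub>R blinfun_lift A \<Phi>"
    by (intro blinfun_eqI)
      (simp add: blinfun_lift_apply scaleR_cont blinfun.scaleR_left bcontfun_operator_scaleR[OF A]
        bcontfun_blinfun_apply)
qed (simp_all add: norm_blinfun_lift_le norm_blinfun_lift_le_weak)

end

lemma blinfun_lift_diff_left:
  assumes "bcontfun_operator A C W" "bcontfun_operator A1 C1 W1" "bcontfun_operator A2 C2 W2"
    and "\<And>g. g \<in> bcontfun \<Longrightarrow> A g = A1 g - A2 g" and "\<Phi> \<in> bcontfun"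
  shows "blinfun_lift A \<Phi> = blinfun_lift A1 \<Phi> - blinfun_lift A2 \<Phi>"
proof (rule blinfun_eqI)
  fix h
  show "blinfun_lift A \<Phi> h = (blinfun_lift A1 \<Phi> - blinfun_lift A2 \<Phi>) h"
    using assms(4)[OF bcontfun_blinfun_apply[OF assms(5)]]
    by (simp add: blinfun_lift_apply[OF assms(1,5)] blinfun_lift_apply[OF assms(2,5)]
        blinfun_lift_apply[OF assms(3,5)] blinfun.diff_left)
qed

definition convolve :: "(('a \<Rightarrow> 'w) \<Rightarrow> 'v) \<Rightarrow> ('a::real_normed_vector \<Rightarrow> 'w) \<Rightarrow> 'a \<Rightarrow> 'v" where
  "convolve A G x = A (\<lambda>z. G (x - z))"

context
  fixes A :: "('a::real_normed_vector \<Rightarrow> 'w::real_normed_vector) \<Rightarrow> 'v::real_normed_vector"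
    and C W :: real
  assumes A: "bcontfun_operator A C W"
begin

lemma norm_convolve_le:
  "G \<in> bcontfun \<Longrightarrow> (\<And>y. norm (G y) \<le> M) \<Longrightarrow> norm (convolve A G x) \<le> C * M"
  unfolding convolve_def by (rule bcontfun_operator_norm_le[OF A bcontfun_shift])

lemma norm_convolve_le_weak:
  "G \<in> bcontfun \<Longrightarrow> (\<And>y. norm (G y) \<le> M) \<Longrightarrow> lipschitz_on L UNIV G \<Longrightarrow>
    norm (convolve A G x) \<le> W * (M + L)"
  unfolding convolve_def by (rule bcontfun_operator_norm_le_weak[OF A bcontfun_shift _ lipschitz_on_shift])

lemma lipschitz_on_convolve:
  assumes "G \<in> bcontfun" "lipschitz_on L UNIV G"
  shows "lipschitz_on (C * L) UNIV (convolve A G)"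
proof (rule lipschitz_onI)
  show "0 \<le> C * L" using bcontfun_operator_nonneg[OF A] lipschitz_on_nonneg[OF assms(2)] by simp
  fix x y :: 'a
  have "convolve A G x - convolve A G y = A (\<lambda>z. G (x - z) - G (y - z))"
    unfolding convolve_def by (simp add: bcontfun_operator_diff[OF A] bcontfun_shift assms(1))
  also have "norm \<dots> \<le> C * (L * dist x y)"
  proof (intro bcontfun_operator_norm_le[OF A] minus_cont bcontfun_shift assms(1))
    fix z
    show "norm (G (x - z) - G (y - z)) \<le> L * dist x y"
      using lipschitz_on_normD[OF assms(2), of "x - z" "y - z"] by (simp add: dist_norm)
  qed
  finally show "dist (convolve A G x) (convolve A G y) \<le> C * L * dist x y"
    by (simp add: dist_norm mult.assoc)
qed

text \<open>The first-order remainder of G is small uniformly in the base point, and A is bounded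
  against the sup norm, so the remainder stays small after applying A.\<close>
lemma has_derivative_convolve:
  assumes deriv: "\<And>x. (G has_derivative blinfun_apply (DG x)) (at x)"
    and uc: "uniformly_continuous_on UNIV DG" and "G \<in> bcontfun" "DG \<in> bcontfun"
  shows "(convolve A G has_derivative blinfun_apply (convolve (blinfun_lift A) DG x)) (at x)"
  unfolding has_derivative_at_alt
proof (intro conjI allI impI blinfun.bounded_linear_right)
  fix e :: real assume "e > 0"
  have "0 \<le> C" by (rule bcontfun_operator_nonneg[OF A])
  then obtain d where "d > 0"
    and rem: "\<And>w h. norm h < d \<Longrightarrow> norm (G (w + h) - G w - DG w h) \<le> e / (C + 1) * norm h"
    using has_derivative_uniform_remainder[OF deriv uc, of "e / (C + 1)"] \<open>e > 0\<close> by auto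
  have "norm (convolve A G y - convolve A G x - convolve (blinfun_lift A) DG x (y - x))
      \<le> e * norm (y - x)" if "norm (y - x) < d" for y
  proof -
    have shifts: "(\<lambda>z. G (y - z)) \<in> bcontfun" "(\<lambda>z. G (x - z)) \<in> bcontfun"
      "(\<lambda>z. DG (x - z)) \<in> bcontfun" "(\<lambda>z. DG (x - z) (y - x)) \<in> bcontfun"
      using bcontfun_shift \<open>G \<in> bcontfun\<close> \<open>DG \<in> bcontfun\<close> bcontfun_blinfun_apply by blast+
    have "convolve A G y - convolve A G x - convolve (blinfun_lift A) DG x (y - x)
        = A (\<lambda>z. G (y - z) - G (x - z) - DG (x - z) (y - x))"
      unfolding convolve_def
      by (simp add: blinfun_lift_apply[OF A shifts(3)] bcontfun_operator_diff[OF A] shifts minus_cont)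
    also have "norm \<dots> \<le> C * (e / (C + 1) * norm (y - x))"
    proof (intro bcontfun_operator_norm_le[OF A] minus_cont shifts)
      fix z
      show "norm (G (y - z) - G (x - z) - DG (x - z) (y - x)) \<le> e / (C + 1) * norm (y - x)"
        using rem[OF that, of "x - z"] by (simp add: algebra_simps)
    qed
    also have "\<dots> \<le> e * norm (y - x)"
      using \<open>0 \<le> C\<close> \<open>e > 0\<close> by (simp add: field_simps mult_right_mono)
    finally show ?thesis .
  qed
  with \<open>d > 0\<close> show "\<exists>d>0. \<forall>y. norm (y - x) < d \<longrightarrow>
      norm (convolve A G y - convolve A G x - convolve (blinfun_lift A) DG x (y - x)) \<le> e * norm (y - x)"
    by blast
qed

end

lemma weak_norm_bdd_above:
  fixes \<xi> :: "'d::finite meas"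
  shows "bdd_above (blinfun_apply \<xi> ` {\<theta>. \<exists>L. lipschitz_on L UNIV (apply_bcontfun \<theta>) \<and> norm \<theta> + L \<le> 1})"
proof (rule bdd_aboveI2)
  fix \<theta> :: "(real^'d) \<Rightarrow>\<^sub>C (real^'d)"
  assume "\<theta> \<in> {\<theta>. \<exists>L. lipschitz_on L UNIV (apply_bcontfun \<theta>) \<and> norm \<theta> + L \<le> 1}"
  then have "norm \<theta> \<le> 1" by (auto dest: lipschitz_on_nonneg)
  then have "norm \<xi> * norm \<theta> \<le> norm \<xi>" by (simp add: mult_left_le)
  then show "blinfun_apply \<xi> \<theta> \<le> norm \<xi>"
    using norm_blinfun[of \<xi> \<theta>] by simp
qed

lemma apply_le_weak_norm:
  fixes \<xi> :: "'d::finite meas"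
  assumes "lipschitz_on L UNIV (apply_bcontfun \<theta>)" "norm \<theta> + L \<le> 1"
  shows "blinfun_apply \<xi> \<theta> \<le> weak_norm \<xi>"
  unfolding weak_norm_def by (rule cSUP_upper[OF _ weak_norm_bdd_above]) (use assms in auto)

lemma weak_norm_nonneg: "0 \<le> weak_norm (\<xi> :: 'd::finite meas)"
  using apply_le_weak_norm[of 0 0 \<xi>] by (simp add: lipschitz_on_constant)

lemma abs_apply_le_weak_norm:
  fixes \<xi> :: "'d::finite meas"
  assumes "lipschitz_on L UNIV (apply_bcontfun \<theta>)"
  shows "\<bar>blinfun_apply \<xi> \<theta>\<bar> \<le> (norm \<theta> + L) * weak_norm \<xi>"
proof (cases "norm \<theta> + L = 0")
  case True
  then have "norm \<theta> = 0" using lipschitz_on_nonneg[OF assms] norm_ge_zero[of \<theta>] by linarith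
  then have "\<theta> = 0" by simp
  then show ?thesis using lipschitz_on_nonneg[OF assms] weak_norm_nonneg[of \<xi>] by simp
next
  case False
  define c where "c = norm \<theta> + L"
  have "c > 0" using False lipschitz_on_nonneg[OF assms] norm_ge_zero[of \<theta>] unfolding c_def by linarith
  have scaled: "a * blinfun_apply \<xi> \<theta> \<le> weak_norm \<xi>" if "\<bar>a\<bar> = 1 / c" for a
  proof -
    have "lipschitz_on (\<bar>a\<bar> * L) UNIV (apply_bcontfun (a *\<^sub>R \<theta>))"
      using lipschitz_on_cmult[OF assms, of a] by simp
    moreover have "norm (a *\<^sub>R \<theta>) + \<bar>a\<bar> * L \<le> 1"
      using that \<open>c > 0\<close> by (simp add: c_def add_divide_distrib[symmetric])
    ultimately show ?thesis
      using apply_le_weak_norm by (fastforce simp: blinfun.scaleR_right)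
  qed
  have "blinfun_apply \<xi> \<theta> \<le> c * weak_norm \<xi>" "- blinfun_apply \<xi> \<theta> \<le> c * weak_norm \<xi>"
    using scaled[of "1 / c"] scaled[of "- 1 / c"] \<open>c > 0\<close> by (simp_all add: field_simps)
  then show ?thesis by (simp add: c_def abs_le_iff)
qed

lemma sup_norm_le:
  "(\<And>x. norm (f x) \<le> c) \<Longrightarrow> sup_norm f \<le> c"
  unfolding sup_norm_def by (rule cSUP_least) auto

definition meas_pairing :: "'d::finite meas \<Rightarrow> (real^'d \<Rightarrow> real^'d^'d) \<Rightarrow> real^'d" where
  "meas_pairing \<xi> g = (\<chi> i. blinfun_apply \<xi> (Bcontfun (\<lambda>z. g z $ i)))"

lemma conv_eq_meas_pairing: "conv K \<xi> x = meas_pairing \<xi> (\<lambda>z. K (x - z))"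
  by (simp add: conv_def meas_pairing_def)

lemma meas_pairing_diff_left: "meas_pairing (\<xi> - \<xi>') g = meas_pairing \<xi> g - meas_pairing \<xi>' g"
  by (simp add: meas_pairing_def vec_eq_iff blinfun.diff_left)

lemma bcontfun_vec_nth:
  fixes g :: "'a::topological_space \<Rightarrow> 'b::real_normed_vector^'n"
  shows "g \<in> bcontfun \<Longrightarrow> (\<lambda>z. g z $ i) \<in> bcontfun"
  using bcontfun_compose_bounded_linear[OF bounded_linear_vec_nth[of i], of g] by simp

lemma norm_Bcontfun_vec_nth_le:
  fixes g :: "'a::topological_space \<Rightarrow> 'b::real_normed_vector^'n"
  assumes "g \<in> bcontfun" "\<And>z. norm (g z) \<le> M"
  shows "norm (Bcontfun (\<lambda>z. g z $ i)) \<le> M"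
proof (rule norm_bound)
  fix x
  show "norm (apply_bcontfun (Bcontfun (\<lambda>z. g z $ i)) x) \<le> M"
    using order_trans[OF Finite_Cartesian_Product.norm_nth_le assms(2)]
    by (simp add: Bcontfun_inverse[OF bcontfun_vec_nth[OF assms(1)]])
qed

lemma lipschitz_on_vec_nth:
  fixes g :: "'a::metric_space \<Rightarrow> 'b::real_normed_vector^'n"
  shows "lipschitz_on L U g \<Longrightarrow> lipschitz_on L U (\<lambda>z. g z $ i)"
  using lipschitz_on_compose_bounded_linear[of "\<lambda>v. v $ i" 1 L U g]
  by (simp add: bounded_linear.linear[OF bounded_linear_vec_nth] Finite_Cartesian_Product.norm_nth_le)

context
  fixes \<xi> :: "'d::finite meas"
begin

lemma norm_meas_pairing_le:
  assumes "g \<in> bcontfun" "\<And>z. norm (g z) \<le> M"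
  shows "norm (meas_pairing \<xi> g) \<le> CARD('d) * norm \<xi> * M"
  unfolding mult.assoc
proof (rule norm_le_card_mult_component_bound)
  fix i
  have "\<bar>blinfun_apply \<xi> (Bcontfun (\<lambda>z. g z $ i))\<bar> \<le> norm \<xi> * norm (Bcontfun (\<lambda>z. g z $ i))"
    using norm_blinfun by (metis real_norm_def)
  also have "\<dots> \<le> norm \<xi> * M"
    using norm_Bcontfun_vec_nth_le[OF assms] by (simp add: mult_left_mono)
  finally show "\<bar>meas_pairing \<xi> g $ i\<bar> \<le> norm \<xi> * M" by (simp add: meas_pairing_def)
qed

lemma norm_meas_pairing_le_weak:
  assumes "g \<in> bcontfun" "\<And>z. norm (g z) \<le> M" "lipschitz_on L UNIV g"
  shows "norm (meas_pairing \<xi> g) \<le> CARD('d) * weak_norm \<xi> * (M + L)"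
  unfolding mult.assoc
proof (rule norm_le_card_mult_component_bound)
  fix i
  have "\<bar>blinfun_apply \<xi> (Bcontfun (\<lambda>z. g z $ i))\<bar>
      \<le> (norm (Bcontfun (\<lambda>z. g z $ i)) + L) * weak_norm \<xi>"
    using lipschitz_on_vec_nth[OF assms(3)]
    by (intro abs_apply_le_weak_norm) (simp add: Bcontfun_inverse[OF bcontfun_vec_nth[OF assms(1)]])
  also have "\<dots> \<le> (M + L) * weak_norm \<xi>"
    using norm_Bcontfun_vec_nth_le[OF assms(1,2)] weak_norm_nonneg[of \<xi>] by (simp add: mult_right_mono)
  finally show "\<bar>meas_pairing \<xi> g $ i\<bar> \<le> weak_norm \<xi> * (M + L)"
    by (simp add: meas_pairing_def mult.commute)
qed

lemma bcontfun_operator_meas_pairing: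
  "bcontfun_operator (meas_pairing \<xi>) (CARD('d) * norm \<xi>) (CARD('d) * weak_norm \<xi>)"
  unfolding bcontfun_operator_def
proof (intro conjI allI impI)
  fix f g :: "real^'d \<Rightarrow> real^'d^'d" assume "f \<in> bcontfun" "g \<in> bcontfun"
  then show "meas_pairing \<xi> (\<lambda>z. f z + g z) = meas_pairing \<xi> f + meas_pairing \<xi> g"
    by (simp add: meas_pairing_def vec_eq_iff Bcontfun_plus bcontfun_vec_nth blinfun.add_right)
next
  fix c and f :: "real^'d \<Rightarrow> real^'d^'d" assume "f \<in> bcontfun"
  then show "meas_pairing \<xi> (\<lambda>z. c *\<^sub>R f z) = c *\<^sub>R meas_pairing \<xi> f"
    by (simp add: meas_pairing_def vec_eq_iff Bcontfun_scaleR bcontfun_vec_nth blinfun.scaleR_right)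
qed (simp_all add: norm_meas_pairing_le norm_meas_pairing_le_weak weak_norm_nonneg)

end

text \<open>What the proof uses of K in UC_b^3: two derivatives, and bounds on K, DK, D^2 K and on their
  Lipschitz constants (the latter coming from the bounds on DK, D^2 K, D^3 K).\<close>
locale smooth_kernel =
  fixes K :: "real^'d::finite \<Rightarrow> real^'d^'d"
    and D1 :: "real^'d \<Rightarrow> ((real^'d) \<Rightarrow>\<^sub>L (real^'d^'d))"
    and D2 :: "real^'d \<Rightarrow> ((real^'d) \<Rightarrow>\<^sub>L ((real^'d) \<Rightarrow>\<^sub>L (real^'d^'d)))"
    and B :: real
  assumes K_deriv: "\<And>x. (K has_derivative blinfun_apply (D1 x)) (at x)"
    and D1_deriv: "\<And>x. (D1 has_derivative blinfun_apply (D2 x)) (at x)"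
    and K_bound: "\<And>x. norm (K x) \<le> B"
    and D1_bound: "\<And>x. norm (D1 x) \<le> B"
    and D2_bound: "\<And>x. norm (D2 x) \<le> B"
    and K_lipschitz: "lipschitz_on B UNIV K"
    and D1_lipschitz: "lipschitz_on B UNIV D1"
    and D2_lipschitz: "lipschitz_on B UNIV D2"
begin

definition conv_deriv :: "'d meas \<Rightarrow> real^'d \<Rightarrow> ((real^'d) \<Rightarrow>\<^sub>L (real^'d))" where
  "conv_deriv \<xi> = convolve (blinfun_lift (meas_pairing \<xi>)) D1"

definition conv_deriv2 :: "'d meas \<Rightarrow> real^'d \<Rightarrow> ((real^'d) \<Rightarrow>\<^sub>L ((real^'d) \<Rightarrow>\<^sub>L (real^'d)))" where
  "conv_deriv2 \<xi> = convolve (blinfun_lift (blinfun_lift (meas_pairing \<xi>))) D2"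

lemma conv_eq_convolve: "conv K \<xi> = convolve (meas_pairing \<xi>) K"
  by (simp add: fun_eq_iff conv_eq_meas_pairing convolve_def)

lemma bcontfun_kernels: "K \<in> bcontfun" "D1 \<in> bcontfun" "D2 \<in> bcontfun"
  by (rule bcontfun_normI[OF lipschitz_on_continuous_on[OF K_lipschitz] K_bound]
      bcontfun_normI[OF lipschitz_on_continuous_on[OF D1_lipschitz] D1_bound]
      bcontfun_normI[OF lipschitz_on_continuous_on[OF D2_lipschitz] D2_bound])+

lemma bcontfun_operator_pairings:
  fixes \<xi> :: "'d meas"
  defines "C \<equiv> CARD('d) * norm \<xi>" and "W \<equiv> CARD('d) * weak_norm \<xi>"
  shows "bcontfun_operator (meas_pairing \<xi>) C W"
    and "bcontfun_operator (blinfun_lift (meas_pairing \<xi>) :: _ \<Rightarrow> ((real^'d) \<Rightarrow>\<^sub>L (real^'d))) C W"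
    and "bcontfun_operator (blinfun_lift (blinfun_lift (meas_pairing \<xi>))
           :: _ \<Rightarrow> ((real^'d) \<Rightarrow>\<^sub>L ((real^'d) \<Rightarrow>\<^sub>L (real^'d)))) C W"
  unfolding C_def W_def
  by (intro bcontfun_operator_blinfun_lift bcontfun_operator_meas_pairing)+

lemma Cb2_derivs_conv: "Cb2_derivs (conv K \<xi>) (conv_deriv \<xi>) (conv_deriv2 \<xi>)"
  unfolding Cb2_derivs_def conv_eq_convolve conv_deriv_def conv_deriv2_def
proof (intro conjI allI)
  fix x
  show "(convolve (meas_pairing \<xi>) K has_derivative
      blinfun_apply (convolve (blinfun_lift (meas_pairing \<xi>)) D1 x)) (at x)"
    by (rule has_derivative_convolve[OF bcontfun_operator_pairings(1) K_deriv
          lipschitz_on_uniformly_continuous[OF D1_lipschitz] bcontfun_kernels(1,2)])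
  show "(convolve (blinfun_lift (meas_pairing \<xi>)) D1 has_derivative
      blinfun_apply (convolve (blinfun_lift (blinfun_lift (meas_pairing \<xi>))) D2 x)) (at x)"
    by (rule has_derivative_convolve[OF bcontfun_operator_pairings(2) D1_deriv
          lipschitz_on_uniformly_continuous[OF D2_lipschitz] bcontfun_kernels(2,3)])
next
  show "continuous_on UNIV (convolve (blinfun_lift (blinfun_lift (meas_pairing \<xi>))) D2)"
    by (rule lipschitz_on_continuous_on
        [OF lipschitz_on_convolve[OF bcontfun_operator_pairings(3) bcontfun_kernels(3) D2_lipschitz]])
qed (auto intro!: boundedI norm_convolve_le bcontfun_operator_pairings bcontfun_kernels
    K_bound D1_bound D2_bound)

lemma conv_diff: "(\<lambda>x. conv K \<xi> x - conv K \<xi>' x) = conv K (\<xi> - \<xi>')"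
  by (simp add: fun_eq_iff conv_eq_meas_pairing meas_pairing_diff_left)

lemma conv_deriv_diff: "(\<lambda>x. conv_deriv \<xi> x - conv_deriv \<xi>' x) = conv_deriv (\<xi> - \<xi>')"
proof
  fix x
  show "conv_deriv \<xi> x - conv_deriv \<xi>' x = conv_deriv (\<xi> - \<xi>') x"
    unfolding conv_deriv_def convolve_def
    by (rule blinfun_lift_diff_left[OF bcontfun_operator_pairings(1,1,1) meas_pairing_diff_left
          bcontfun_shift[OF bcontfun_kernels(2)], symmetric])
qed

lemma conv_deriv2_diff: "(\<lambda>x. conv_deriv2 \<xi> x - conv_deriv2 \<xi>' x) = conv_deriv2 (\<xi> - \<xi>')"
proof
  fix x
  show "conv_deriv2 \<xi> x - conv_deriv2 \<xi>' x = conv_deriv2 (\<xi> - \<xi>') x"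
    unfolding conv_deriv2_def convolve_def
    by (rule blinfun_lift_diff_left[OF bcontfun_operator_pairings(2,2,2)
          blinfun_lift_diff_left[OF bcontfun_operator_pairings(1,1,1) meas_pairing_diff_left]
          bcontfun_shift[OF bcontfun_kernels(3)], symmetric])
qed

lemma sup_norm_conv_le:
  "sup_norm (conv K \<eta>) \<le> 2 * real CARD('d) * B * weak_norm \<eta>"
  "sup_norm (conv_deriv \<eta>) \<le> 2 * real CARD('d) * B * weak_norm \<eta>"
  "sup_norm (conv_deriv2 \<eta>) \<le> 2 * real CARD('d) * B * weak_norm \<eta>"
proof -
  have "real CARD('d) * weak_norm \<eta> * (B + B) = 2 * real CARD('d) * B * weak_norm \<eta>"
    by (simp add: algebra_simps)
  then show "sup_norm (conv K \<eta>) \<le> 2 * real CARD('d) * B * weak_norm \<eta>"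
    "sup_norm (conv_deriv \<eta>) \<le> 2 * real CARD('d) * B * weak_norm \<eta>"
    "sup_norm (conv_deriv2 \<eta>) \<le> 2 * real CARD('d) * B * weak_norm \<eta>"
    unfolding conv_eq_convolve conv_deriv_def conv_deriv2_def
    using norm_convolve_le_weak[OF bcontfun_operator_pairings(1) bcontfun_kernels(1) K_bound K_lipschitz]
      norm_convolve_le_weak[OF bcontfun_operator_pairings(2) bcontfun_kernels(2) D1_bound D1_lipschitz]
      norm_convolve_le_weak[OF bcontfun_operator_pairings(3) bcontfun_kernels(3) D2_bound D2_lipschitz]
    by (metis sup_norm_le)+
qed

lemma Cb2_norm_conv_le:
  "Cb2_norm (conv K \<eta>) (conv_deriv \<eta>) (conv_deriv2 \<eta>) \<le> 6 * real CARD('d) * B * weak_norm \<eta>"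
  using sup_norm_conv_le[of \<eta>] unfolding Cb2_norm_def by linarith

end

lemma UCb3_imp_smooth_kernel:
  fixes K :: "real^'d::finite \<Rightarrow> real^'d^'d"
  assumes "UCb3 K"
  obtains D1 D2 B where "smooth_kernel K D1 D2 B"
proof -
  obtain D1 :: "real^'d \<Rightarrow> ((real^'d) \<Rightarrow>\<^sub>L (real^'d^'d))"
    and D2 :: "real^'d \<Rightarrow> ((real^'d) \<Rightarrow>\<^sub>L ((real^'d) \<Rightarrow>\<^sub>L (real^'d^'d)))"
    and D3 :: "real^'d \<Rightarrow> ((real^'d) \<Rightarrow>\<^sub>L ((real^'d) \<Rightarrow>\<^sub>L ((real^'d) \<Rightarrow>\<^sub>L (real^'d^'d))))"
    where d1: "\<And>x. (K has_derivative blinfun_apply (D1 x)) (at x)"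
      and d2: "\<And>x. (D1 has_derivative blinfun_apply (D2 x)) (at x)"
      and d3: "\<And>x. (D2 has_derivative blinfun_apply (D3 x)) (at x)"
      and bounded: "bounded (range K)" "bounded (range D1)" "bounded (range D2)" "bounded (range D3)"
    using assms unfolding UCb3_def by blast
  obtain B0 B1 B2 B3 where "B0 > 0" "B1 > 0" "B2 > 0" "B3 > 0"
    and "\<And>x. norm (K x) \<le> B0" "\<And>x. norm (D1 x) \<le> B1" "\<And>x. norm (D2 x) \<le> B2"
      "\<And>x. norm (D3 x) \<le> B3"
    using bounded unfolding bounded_pos by (metis rangeI)
  then have bound: "\<And>x. norm (K x) \<le> B0 + B1 + B2 + B3" "\<And>x. norm (D1 x) \<le> B0 + B1 + B2 + B3"
      "\<And>x. norm (D2 x) \<le> B0 + B1 + B2 + B3" "\<And>x. norm (D3 x) \<le> B0 + B1 + B2 + B3"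
    and nonneg: "0 \<le> B0 + B1 + B2 + B3"
    by (smt (verit))+
  show ?thesis
  proof (rule that, unfold_locales)
    show "lipschitz_on (B0 + B1 + B2 + B3) UNIV K"
      by (rule lipschitz_on_blinfun_derivative_bound[OF d1 bound(2) nonneg])
    show "lipschitz_on (B0 + B1 + B2 + B3) UNIV D1"
      by (rule lipschitz_on_blinfun_derivative_bound[OF d2 bound(3) nonneg])
    show "lipschitz_on (B0 + B1 + B2 + B3) UNIV D2"
      by (rule lipschitz_on_blinfun_derivative_bound[OF d3 bound(4) nonneg])
  qed (fact d1 d2 bound)+
qed

theorem lemma3p1:
  fixes K :: "real^'d::finite \<Rightarrow> real^'d^'d"
  assumes "UCb3 K"
  shows "\<exists>(DB :: 'd meas \<Rightarrow> real^'d \<Rightarrow> ((real^'d) \<Rightarrow>\<^sub>L (real^'d)))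
            (D2B :: 'd meas \<Rightarrow> real^'d \<Rightarrow> ((real^'d) \<Rightarrow>\<^sub>L ((real^'d) \<Rightarrow>\<^sub>L (real^'d)))).
           (\<forall>\<xi>. Cb2_derivs (conv K \<xi>) (DB \<xi>) (D2B \<xi>)) \<and>
           (\<forall>\<xi> \<epsilon>. \<epsilon> > 0 \<longrightarrow> (\<exists>\<delta>>0. \<forall>\<xi>'. weak_norm (\<xi> - \<xi>') < \<delta> \<longrightarrow>
               Cb2_norm (\<lambda>x. conv K \<xi> x - conv K \<xi>' x) (\<lambda>x. DB \<xi> x - DB \<xi>' x)
                        (\<lambda>x. D2B \<xi> x - D2B \<xi>' x) < \<epsilon>)) \<and>
           (\<exists>CB>0.
              (\<forall>\<xi>. Cb2_norm (conv K \<xi>) (DB \<xi>) (D2B \<xi>) \<le> CB * (weak_norm \<xi> + 1)) \<and>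
              (\<forall>\<xi> \<xi>'. sup_norm (\<lambda>x. conv K \<xi> x - conv K \<xi>' x) \<le> CB * weak_norm (\<xi> - \<xi>')) \<and>
              (\<forall>\<xi> \<xi>'. sup_norm (\<lambda>x. DB \<xi> x - DB \<xi>' x) \<le> CB * weak_norm (\<xi> - \<xi>')))"
proof -
  obtain D1 D2 B where "smooth_kernel K D1 D2 B" using UCb3_imp_smooth_kernel[OF assms] .
  then interpret smooth_kernel K D1 D2 B .
  define CB where "CB = 6 * real CARD('d) * B + 1"
  have "0 \<le> 6 * real CARD('d) * B" using lipschitz_on_nonneg[OF K_lipschitz] by simp
  then have "CB > 0" "6 * real CARD('d) * B \<le> CB" "2 * real CARD('d) * B \<le> CB"
    unfolding CB_def by linarith+
  then have Cb2: "Cb2_norm (conv K \<eta>) (conv_deriv \<eta>) (conv_deriv2 \<eta>) \<le> CB * weak_norm \<eta>"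
    and sup: "sup_norm (conv K \<eta>) \<le> CB * weak_norm \<eta>" "sup_norm (conv_deriv \<eta>) \<le> CB * weak_norm \<eta>"
    for \<eta>
    using Cb2_norm_conv_le[of \<eta>] sup_norm_conv_le[of \<eta>] mult_right_mono[OF _ weak_norm_nonneg]
    by (meson order_trans)+
  show ?thesis
  proof (rule exI[of _ conv_deriv], rule exI[of _ conv_deriv2],
      unfold conv_diff conv_deriv_diff conv_deriv2_diff, intro conjI allI impI Cb2_derivs_conv)
    fix \<xi> :: "'d meas" and \<epsilon> :: real assume "\<epsilon> > 0"
    have "Cb2_norm (conv K (\<xi> - \<xi>')) (conv_deriv (\<xi> - \<xi>')) (conv_deriv2 (\<xi> - \<xi>')) < \<epsilon>"
      if "weak_norm (\<xi> - \<xi>') < \<epsilon> / CB" for \<xi>'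
      using Cb2[of "\<xi> - \<xi>'"] that \<open>CB > 0\<close> by (simp add: field_simps)
    with \<open>\<epsilon> > 0\<close> \<open>CB > 0\<close> show "\<exists>\<delta>>0. \<forall>\<xi>'. weak_norm (\<xi> - \<xi>') < \<delta> \<longrightarrow>
        Cb2_norm (conv K (\<xi> - \<xi>')) (conv_deriv (\<xi> - \<xi>')) (conv_deriv2 (\<xi> - \<xi>')) < \<epsilon>"
      by (intro exI[of _ "\<epsilon> / CB"]) auto
  next
    have "Cb2_norm (conv K \<xi>) (conv_deriv \<xi>) (conv_deriv2 \<xi>) \<le> CB * (weak_norm \<xi> + 1)" for \<xi>
      using Cb2[of \<xi>] \<open>CB > 0\<close> by (simp add: algebra_simps)
    with \<open>CB > 0\<close> sup show "\<exists>CB>0.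
        (\<forall>\<xi>. Cb2_norm (conv K \<xi>) (conv_deriv \<xi>) (conv_deriv2 \<xi>) \<le> CB * (weak_norm \<xi> + 1)) \<and>
        (\<forall>\<xi> \<xi>'. sup_norm (conv K (\<xi> - \<xi>')) \<le> CB * weak_norm (\<xi> - \<xi>')) \<and>
        (\<forall>\<xi> \<xi>'. sup_norm (conv_deriv (\<xi> - \<xi>')) \<le> CB * weak_norm (\<xi> - \<xi>'))"
      by blast
  qed
qed

end
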